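(* Let $K$ be a finite simplicial complex with a hereditary ordering $\succ$, and let $r$ be a positive integer. Suppose that for any two simplices $\sigma,\tau\in K$ with $\dim\sigma=\dim\tau\ge r$ and $\mu(\sigma)=\mu(\tau)$ we have $\sigma\cup\tau\in K$. Then $K$ collapses on a subcomplex of dimension less than $r$.
   Context: $K$ is a finite simplicial complex (family of subsets of a finite vertex set containing $\emptyset$, closed under subsets); $\dim\sigma=|\sigma|-1$. For a strict total ordering $\succ$ of $K$ and non-empty $\sigma$, $\mu(\sigma)$ is the $\succ$-largest facet (codimension-one face) of $\sigma$; $\succ$ is hereditary if $\sigma\succ\tau$ whenever $\dim\sigma>\dim\tau$, and $\sigma\succ\tau$ whenever $\mu(\sigma)\succ\mu(\tau)$. A pair of non-empty simplices $(\sigma,\tau)$ is a free pair of $K$ if $\tau$ is a facet of $\sigma$ and $K\setminus\{\sigma,\tau\}$ is a simplicial complex; removing it is an elementary collapse. $K$ collapses on a subcomplex $L$ if $L$ is obtained from $K$ by a finite sequence of elementary collapses. *)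

theory Defs
  imports Main
begin

definition simplicial_complex :: "'a set set \<Rightarrow> bool" where
  "simplicial_complex K \<longleftrightarrow> finite K \<and> (\<forall>\<sigma>\<in>K. finite \<sigma>) \<and> {} \<in> K \<and>
     (\<forall>\<sigma>\<in>K. \<forall>\<tau>. \<tau> \<subseteq> \<sigma> \<longrightarrow> \<tau> \<in> K)"

definition sdim :: "'a set \<Rightarrow> int" where
  "sdim \<sigma> = int (card \<sigma>) - 1"

definition facets :: "'a set \<Rightarrow> 'a set set" where
  "facets \<sigma> = {\<tau>. \<tau> \<subseteq> \<sigma> \<and> card \<tau> + 1 = card \<sigma>}"

definition strict_total_order_on :: "'a set set \<Rightarrow> ('a set \<Rightarrow> 'a set \<Rightarrow> bool) \<Rightarrow> bool" where
  "strict_total_order_on K gt \<longleftrightarrow>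
     (\<forall>\<sigma>\<in>K. \<not> gt \<sigma> \<sigma>) \<and>
     (\<forall>\<sigma>\<in>K. \<forall>\<tau>\<in>K. \<forall>\<rho>\<in>K. gt \<sigma> \<tau> \<longrightarrow> gt \<tau> \<rho> \<longrightarrow> gt \<sigma> \<rho>) \<and>
     (\<forall>\<sigma>\<in>K. \<forall>\<tau>\<in>K. \<sigma> \<noteq> \<tau> \<longrightarrow> gt \<sigma> \<tau> \<or> gt \<tau> \<sigma>)"

definition mu :: "('a set \<Rightarrow> 'a set \<Rightarrow> bool) \<Rightarrow> 'a set \<Rightarrow> 'a set" where
  "mu gt \<sigma> = (THE \<tau>. \<tau> \<in> facets \<sigma> \<and> (\<forall>\<rho>\<in>facets \<sigma>. \<rho> \<noteq> \<tau> \<longrightarrow> gt \<tau> \<rho>))"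

definition hereditary :: "'a set set \<Rightarrow> ('a set \<Rightarrow> 'a set \<Rightarrow> bool) \<Rightarrow> bool" where
  "hereditary K gt \<longleftrightarrow> strict_total_order_on K gt \<and>
     (\<forall>\<sigma>\<in>K. \<forall>\<tau>\<in>K. sdim \<sigma> > sdim \<tau> \<longrightarrow> gt \<sigma> \<tau>) \<and>
     (\<forall>\<sigma>\<in>K. \<forall>\<tau>\<in>K. \<sigma> \<noteq> {} \<longrightarrow> \<tau> \<noteq> {} \<longrightarrow> gt (mu gt \<sigma>) (mu gt \<tau>) \<longrightarrow> gt \<sigma> \<tau>)"

definition free_pair :: "'a set set \<Rightarrow> 'a set \<Rightarrow> 'a set \<Rightarrow> bool" where
  "free_pair K \<sigma> \<tau> \<longleftrightarrow> \<sigma> \<in> K \<and> \<tau> \<noteq> {} \<and> \<tau> \<in> facets \<sigma> \<and>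
     simplicial_complex (K - {\<sigma>, \<tau>})"

definition elementary_collapse :: "'a set set \<Rightarrow> 'a set set \<Rightarrow> bool" where
  "elementary_collapse K L \<longleftrightarrow> (\<exists>\<sigma> \<tau>. free_pair K \<sigma> \<tau> \<and> L = K - {\<sigma>, \<tau>})"

definition collapses_on :: "'a set set \<Rightarrow> 'a set set \<Rightarrow> bool" where
  "collapses_on K L \<longleftrightarrow> elementary_collapse\<^sup>*\<^sup>* K L"

end

theory Submission
  imports Defs
begin

text \<open>
  Collapse repeatedly the \<open>\<succ>\<close>-greatest remaining simplex \<open>\<sigma>\<close> of dimension \<open>\<ge> r\<close> onto its facet
  \<open>\<mu>(\<sigma>)\<close>. Heredity makes \<open>\<mu>\<^sup>j(\<sigma>)\<close> the \<open>\<succ>\<close>-greatest face of \<open>\<sigma>\<close> of codimension \<open>j\<close>. If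
  \<open>\<mu>(\<sigma>)\<close> were not free, a second coface \<open>\<tau>\<close> would have the same dimension and, by heredity,
  \<open>\<mu>(\<tau>) = \<mu>(\<sigma>)\<close>; by hypothesis \<open>\<sigma> \<union> \<tau>\<close> is a simplex, and comparing the iterates of \<open>\<mu>\<close> on
  \<open>\<sigma> \<union> \<tau>\<close>, \<open>\<sigma>\<close> and \<open>\<tau>\<close> gives \<open>\<mu>(\<sigma> \<union> \<tau>) = \<sigma>\<close>. The \<open>\<succ>\<close>-least simplex \<open>\<rho>\<close> with \<open>\<mu>(\<rho>) = \<sigma>\<close>
  has higher dimension, so it was collapsed earlier, and since a facet of the form \<open>\<mu>(\<sigma>')\<close> is never
  \<open>\<succ>\<close>-least in its \<open>\<mu>\<close>-class, \<open>\<rho>\<close> was collapsed onto \<open>\<mu>(\<rho>) = \<sigma>\<close>, a contradiction.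
\<close>

lemma finite_ex_greatest_wrt:
  assumes "finite S" "S \<noteq> {}"
    and R_trans: "\<And>x y z. x \<in> S \<Longrightarrow> y \<in> S \<Longrightarrow> z \<in> S \<Longrightarrow> R x y \<Longrightarrow> R y z \<Longrightarrow> R x z"
    and R_total: "\<And>x y. x \<in> S \<Longrightarrow> y \<in> S \<Longrightarrow> x \<noteq> y \<Longrightarrow> R x y \<or> R y x"
  shows "\<exists>x\<in>S. \<forall>y\<in>S. y \<noteq> x \<longrightarrow> R x y"
proof -
  have "\<exists>x\<in>T. \<forall>y\<in>T. y \<noteq> x \<longrightarrow> R x y" if "finite T" "T \<noteq> {}" "T \<subseteq> S" for T
    using that
  proof (induction T rule: finite_ne_induct)
    case (insert x T)
    obtain m where m: "m \<in> T" "\<forall>y\<in>T. y \<noteq> m \<longrightarrow> R m y"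
      using insert.IH insert.prems by auto
    show ?case
    proof (cases "R x m")
      case True
      have "R x y" if "y \<in> T" "y \<noteq> m" for y
        using R_trans[of x m y] True m that insert.prems by blast
      then have "\<forall>y\<in>insert x T. y \<noteq> x \<longrightarrow> R x y"
        using True by blast
      then show ?thesis using insertI1 by (rule bexI)
    next
      case False
      have "x \<in> S" "m \<in> S" "x \<noteq> m" using m(1) insert.prems insert.hyps by auto
      then have "R m x" using R_total False by blast
      then have "\<forall>y\<in>insert x T. y \<noteq> m \<longrightarrow> R m y"
        using m(2) by simp
      then show ?thesis using m(1) by blast
    qed
  qed blast
  then show ?thesis using assms(1,2) by blast
qed

lemma facet_insert: "finite \<tau> \<Longrightarrow> x \<notin> \<tau> \<Longrightarrow> \<tau> \<in> facets (insert x \<tau>)"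
  unfolding facets_def by auto

lemma facet_Diff: "finite \<sigma> \<Longrightarrow> x \<in> \<sigma> \<Longrightarrow> \<sigma> - {x} \<in> facets \<sigma>"
  unfolding facets_def using card_Suc_Diff1 by fastforce

lemma facetsE:
  assumes "finite \<sigma>" "\<tau> \<in> facets \<sigma>"
  obtains x where "x \<notin> \<tau>" "\<sigma> = insert x \<tau>"
proof -
  have "\<tau> \<subseteq> \<sigma>" "card \<tau> + 1 = card \<sigma>" using assms(2) unfolding facets_def by auto
  then have "card (\<sigma> - \<tau>) = 1"
    using assms(1) by (simp add: card_Diff_subset finite_subset)
  then obtain x where "\<sigma> - \<tau> = {x}" by (rule card_1_singletonE)
  then show thesis using that \<open>\<tau> \<subseteq> \<sigma>\<close> by blast
qed

lemma facet_of_Un_siblings: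
  assumes "finite \<sigma>" "finite \<tau>" "\<rho> \<in> facets \<sigma>" "\<rho> \<in> facets \<tau>" "\<sigma> \<noteq> \<tau>"
  shows "\<sigma> \<in> facets (\<sigma> \<union> \<tau>)"
proof -
  obtain a where a: "a \<notin> \<rho>" "\<sigma> = insert a \<rho>" using facetsE[OF assms(1,3)] .
  obtain b where b: "b \<notin> \<rho>" "\<tau> = insert b \<rho>" using facetsE[OF assms(2,4)] .
  have "b \<notin> \<sigma>" "\<sigma> \<union> \<tau> = insert b \<sigma>" using a b assms(5) by auto
  then show ?thesis using facet_insert assms(1) by metis
qed

lemma free_pairI:
  assumes L: "simplicial_complex L" and "\<sigma> \<in> L" "\<tau> \<in> facets \<sigma>" "\<tau> \<noteq> {}"
    and cofaces: "\<And>\<omega>. \<omega> \<in> L \<Longrightarrow> \<tau> \<subseteq> \<omega> \<Longrightarrow> \<omega> = \<tau> \<or> \<omega> = \<sigma>"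
  shows "free_pair L \<sigma> \<tau>"
proof -
  have "\<tau> \<subseteq> \<sigma>" using assms(3) unfolding facets_def by blast
  have "simplicial_complex (L - {\<sigma>, \<tau>})"
    unfolding simplicial_complex_def
  proof (intro conjI ballI allI impI)
    fix \<omega> \<rho> assume \<omega>: "\<omega> \<in> L - {\<sigma>, \<tau>}" and "\<rho> \<subseteq> \<omega>"
    then have "\<rho> \<in> L" using L unfolding simplicial_complex_def by blast
    moreover have "\<rho> \<noteq> \<sigma>" "\<rho> \<noteq> \<tau>"
      using cofaces \<omega> \<open>\<rho> \<subseteq> \<omega>\<close> \<open>\<tau> \<subseteq> \<sigma>\<close> by blast+
    ultimately show "\<rho> \<in> L - {\<sigma>, \<tau>}" by blast
  qed (use L \<open>\<tau> \<noteq> {}\<close> \<open>\<tau> \<subseteq> \<sigma>\<close> in \<open>auto simp: simplicial_complex_def\<close>)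
  then show ?thesis unfolding free_pair_def using assms by blast
qed

locale hereditary_complex =
  fixes K :: "'a set set" and gt :: "'a set \<Rightarrow> 'a set \<Rightarrow> bool"
  assumes complex: "simplicial_complex K" and hereditary: "hereditary K gt"
begin

abbreviation geq :: "'a set \<Rightarrow> 'a set \<Rightarrow> bool" where
  "geq \<sigma> \<tau> \<equiv> \<sigma> = \<tau> \<or> gt \<sigma> \<tau>"

lemma face_mem: "\<sigma> \<in> K \<Longrightarrow> \<tau> \<subseteq> \<sigma> \<Longrightarrow> \<tau> \<in> K"
  using complex unfolding simplicial_complex_def by blast

lemma finite_simplex: "\<sigma> \<in> K \<Longrightarrow> finite \<sigma>"
  using complex unfolding simplicial_complex_def by blast

lemma finite_complex: "finite K"
  using complex unfolding simplicial_complex_def by blast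

lemma strict_total_order: "strict_total_order_on K gt"
  using hereditary unfolding hereditary_def by (rule conjunct1)

lemma gt_irrefl: "\<sigma> \<in> K \<Longrightarrow> \<not> gt \<sigma> \<sigma>"
  using strict_total_order unfolding strict_total_order_on_def by blast

lemma gt_trans: "\<sigma> \<in> K \<Longrightarrow> \<tau> \<in> K \<Longrightarrow> \<rho> \<in> K \<Longrightarrow> gt \<sigma> \<tau> \<Longrightarrow> gt \<tau> \<rho> \<Longrightarrow> gt \<sigma> \<rho>"
  using strict_total_order unfolding strict_total_order_on_def by blast

lemma gt_total: "\<sigma> \<in> K \<Longrightarrow> \<tau> \<in> K \<Longrightarrow> \<sigma> \<noteq> \<tau> \<Longrightarrow> gt \<sigma> \<tau> \<or> gt \<tau> \<sigma>"
  using strict_total_order unfolding strict_total_order_on_def by blast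

lemma gt_asym: "\<sigma> \<in> K \<Longrightarrow> \<tau> \<in> K \<Longrightarrow> gt \<sigma> \<tau> \<Longrightarrow> \<not> gt \<tau> \<sigma>"
  using gt_trans gt_irrefl by blast

lemma geq_trans: "\<sigma> \<in> K \<Longrightarrow> \<tau> \<in> K \<Longrightarrow> \<rho> \<in> K \<Longrightarrow> geq \<sigma> \<tau> \<Longrightarrow> geq \<tau> \<rho> \<Longrightarrow> geq \<sigma> \<rho>"
  using gt_trans by blast

lemma geq_antisym: "\<sigma> \<in> K \<Longrightarrow> \<tau> \<in> K \<Longrightarrow> geq \<sigma> \<tau> \<Longrightarrow> geq \<tau> \<sigma> \<Longrightarrow> \<sigma> = \<tau>"
  using gt_asym by blast

lemma gt_if_card_less: "\<sigma> \<in> K \<Longrightarrow> \<tau> \<in> K \<Longrightarrow> card \<tau> < card \<sigma> \<Longrightarrow> gt \<sigma> \<tau>"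
  using hereditary unfolding hereditary_def sdim_def by simp

lemma gt_if_mu_gt:
  "\<sigma> \<in> K \<Longrightarrow> \<tau> \<in> K \<Longrightarrow> \<sigma> \<noteq> {} \<Longrightarrow> \<tau> \<noteq> {} \<Longrightarrow> gt (mu gt \<sigma>) (mu gt \<tau>) \<Longrightarrow> gt \<sigma> \<tau>"
  using hereditary unfolding hereditary_def by blast

lemma ex_greatest: "finite S \<Longrightarrow> S \<noteq> {} \<Longrightarrow> S \<subseteq> K \<Longrightarrow> \<exists>\<sigma>\<in>S. \<forall>\<tau>\<in>S. geq \<sigma> \<tau>"
  using finite_ex_greatest_wrt[of S gt] gt_trans gt_total by (metis subsetD)

lemma ex_least: "finite S \<Longrightarrow> S \<noteq> {} \<Longrightarrow> S \<subseteq> K \<Longrightarrow> \<exists>\<sigma>\<in>S. \<forall>\<tau>\<in>S. geq \<tau> \<sigma>"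
  using finite_ex_greatest_wrt[of S "\<lambda>\<sigma> \<tau>. gt \<tau> \<sigma>"] gt_trans gt_total by (metis subsetD)

lemma facets_subset_complex: "\<sigma> \<in> K \<Longrightarrow> facets \<sigma> \<subseteq> K"
  unfolding facets_def using face_mem by blast

lemma mu_greatest_facet:
  assumes "\<sigma> \<in> K" "\<sigma> \<noteq> {}"
  shows "mu gt \<sigma> \<in> facets \<sigma>" and "\<tau> \<in> facets \<sigma> \<Longrightarrow> geq (mu gt \<sigma>) \<tau>"
proof -
  obtain x where "x \<in> \<sigma>" using assms(2) by blast
  then have "facets \<sigma> \<noteq> {}"
    using facet_Diff[OF finite_simplex[OF assms(1)]] by auto
  moreover have "finite (facets \<sigma>)"
    using finite_simplex[OF assms(1)] unfolding facets_def by simp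
  ultimately obtain \<mu> where \<mu>: "\<mu> \<in> facets \<sigma>" "\<forall>\<tau>\<in>facets \<sigma>. geq \<mu> \<tau>"
    using ex_greatest[OF _ _ facets_subset_complex[OF assms(1)]] by meson
  have "mu gt \<sigma> = \<mu>"
    unfolding mu_def
  proof (rule the_equality)
    fix \<rho> assume \<rho>: "\<rho> \<in> facets \<sigma> \<and> (\<forall>\<tau>\<in>facets \<sigma>. \<tau> \<noteq> \<rho> \<longrightarrow> gt \<rho> \<tau>)"
    show "\<rho> = \<mu>"
    proof (rule ccontr)
      assume "\<rho> \<noteq> \<mu>"
      then have "gt \<rho> \<mu>" "gt \<mu> \<rho>" using \<rho> \<mu> by auto
      then show False using gt_asym facets_subset_complex[OF assms(1)] \<rho> \<mu>(1) by blast
    qed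
  qed (use \<mu> in blast)
  then show "mu gt \<sigma> \<in> facets \<sigma>" and "\<tau> \<in> facets \<sigma> \<Longrightarrow> geq (mu gt \<sigma>) \<tau>"
    using \<mu> by auto
qed

lemma mu_face:
  assumes "\<sigma> \<in> K" "\<sigma> \<noteq> {}"
  shows "mu gt \<sigma> \<subseteq> \<sigma>" "card (mu gt \<sigma>) + 1 = card \<sigma>" "mu gt \<sigma> \<in> K"
  using mu_greatest_facet(1)[OF assms] face_mem[OF assms(1)] unfolding facets_def by auto

lemma funpow_mu_face:
  assumes "\<sigma> \<in> K" "j \<le> card \<sigma>"
  shows "(mu gt ^^ j) \<sigma> \<in> K \<and> (mu gt ^^ j) \<sigma> \<subseteq> \<sigma> \<and> card ((mu gt ^^ j) \<sigma>) = card \<sigma> - j"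
  using assms(2)
proof (induction j)
  case (Suc j)
  then have "(mu gt ^^ j) \<sigma> \<noteq> {}" by auto
  with Suc show ?case using mu_face[of "(mu gt ^^ j) \<sigma>"] by auto
qed (simp add: assms(1))

lemma funpow_mu_Suc: "(mu gt ^^ Suc j) \<sigma> = (mu gt ^^ j) (mu gt \<sigma>)"
  by (simp only: funpow_Suc_right comp_def)

text \<open>The contrapositive of the second hereditary axiom, iterated.\<close>
lemma funpow_mu_mono:
  assumes "\<sigma> \<in> K" "\<tau> \<in> K" "card \<sigma> = card \<tau>" "geq \<tau> \<sigma>" "j \<le> card \<sigma>"
  shows "geq ((mu gt ^^ j) \<tau>) ((mu gt ^^ j) \<sigma>)"
  using assms
proof (induction j arbitrary: \<sigma> \<tau>)
  case (Suc j)
  then have ne: "\<sigma> \<noteq> {}" "\<tau> \<noteq> {}" by auto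
  note \<mu>\<sigma> = mu_face[OF Suc.prems(1) ne(1)] and \<mu>\<tau> = mu_face[OF Suc.prems(2) ne(2)]
  have "geq (mu gt \<tau>) (mu gt \<sigma>)"
    using gt_total[OF \<mu>\<sigma>(3) \<mu>\<tau>(3)] gt_if_mu_gt[OF Suc.prems(1,2) ne] gt_asym Suc.prems(1,2,4)
    by blast
  then show ?case
    using Suc.IH[OF \<mu>\<sigma>(3) \<mu>\<tau>(3)] \<mu>\<sigma>(2) \<mu>\<tau>(2) Suc.prems(3,5) by (simp only: funpow_mu_Suc)
qed simp

lemma funpow_mu_greatest:
  assumes "\<sigma> \<in> K" "\<omega> \<subseteq> \<sigma>" "card \<omega> + j = card \<sigma>"
  shows "geq ((mu gt ^^ j) \<sigma>) \<omega>"
  using assms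
proof (induction j arbitrary: \<sigma> \<omega>)
  case 0
  then show ?case using card_subset_eq[OF finite_simplex[OF "0.prems"(1)] "0.prems"(2)] by simp
next
  case (Suc j)
  have fin: "finite \<sigma>" using finite_simplex Suc.prems(1) .
  have "\<omega> \<noteq> \<sigma>" using Suc.prems(3) by auto
  then obtain x where x: "x \<in> \<sigma>" "x \<notin> \<omega>" using Suc.prems(2) by blast
  let ?\<phi> = "\<sigma> - {x}"
  have \<phi>: "?\<phi> \<in> facets \<sigma>" "?\<phi> \<in> K" "\<omega> \<subseteq> ?\<phi>"
    using facet_Diff[OF fin x(1)] facets_subset_complex Suc.prems(1,2) x(2) by auto
  have "\<sigma> \<noteq> {}" using x by auto
  note \<mu> = mu_face[OF Suc.prems(1) this] and \<mu>_greatest = mu_greatest_facet[OF Suc.prems(1) this]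
  have card_\<phi>: "card ?\<phi> = card (mu gt \<sigma>)" "card \<omega> + j = card ?\<phi>" "j \<le> card ?\<phi>"
    using fin x Suc.prems(3) \<mu>(2) by auto
  have "geq ((mu gt ^^ j) (mu gt \<sigma>)) ((mu gt ^^ j) ?\<phi>)"
    using funpow_mu_mono[OF \<phi>(2) \<mu>(3) card_\<phi>(1) \<mu>_greatest(2)[OF \<phi>(1)] card_\<phi>(3)] .
  moreover have "geq ((mu gt ^^ j) ?\<phi>) \<omega>" using Suc.IH[OF \<phi>(2,3) card_\<phi>(2)] .
  moreover have "(mu gt ^^ j) (mu gt \<sigma>) \<in> K" "(mu gt ^^ j) ?\<phi> \<in> K" "\<omega> \<in> K"
    using funpow_mu_face[OF \<mu>(3)] funpow_mu_face[OF \<phi>(2)] card_\<phi> face_mem[OF Suc.prems(1,2)]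
    by auto
  ultimately show ?case unfolding funpow_mu_Suc using geq_trans by blast
qed

lemma funpow_mu_Suc_in_facet:
  assumes "\<sigma> \<in> K" "\<rho> \<in> facets \<sigma>" "Suc j \<le> card \<sigma>" "(mu gt ^^ Suc j) \<sigma> \<subseteq> \<rho>"
  shows "(mu gt ^^ Suc j) \<sigma> = (mu gt ^^ j) \<rho>"
proof -
  have \<rho>: "\<rho> \<in> K" "\<rho> \<subseteq> \<sigma>" "card \<rho> + 1 = card \<sigma>"
    using assms(1,2) facets_subset_complex unfolding facets_def by auto
  have "j \<le> card \<rho>" using \<rho>(3) assms(3) by simp
  note Z = funpow_mu_face[OF assms(1,3)] and W = funpow_mu_face[OF \<rho>(1) this]
  have "card ((mu gt ^^ Suc j) \<sigma>) + j = card \<rho>" using Z \<rho>(3) assms(3) by simp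
  then have below: "geq ((mu gt ^^ j) \<rho>) ((mu gt ^^ Suc j) \<sigma>)"
    by (rule funpow_mu_greatest[OF \<rho>(1) assms(4)])
  have "(mu gt ^^ j) \<rho> \<subseteq> \<sigma>" "card ((mu gt ^^ j) \<rho>) + Suc j = card \<sigma>"
    using W \<rho>(2,3) assms(3) by auto
  then have above: "geq ((mu gt ^^ Suc j) \<sigma>) ((mu gt ^^ j) \<rho>)"
    by (rule funpow_mu_greatest[OF assms(1)])
  show ?thesis using geq_antisym[OF _ _ above below] Z W by blast
qed

text \<open>If \<open>\<sigma>\<close> and \<open>\<tau>\<close> share their \<open>mu\<close>-facet \<open>m\<close>, every face of \<open>\<sigma> \<union> \<tau>\<close> of the form \<open>insert x m'\<close> with
  \<open>m' \<subseteq> m\<close> lies in \<open>\<sigma>\<close> or in \<open>\<tau>\<close>; so, by downward induction, \<open>mu\<^sup>j (\<sigma> \<union> \<tau>)\<close> is also an iterate of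
  \<open>mu\<close> on \<open>\<sigma>\<close> or \<open>\<tau>\<close>, hence of \<open>mu\<close> on \<open>m\<close>.\<close>
lemma funpow_mu_Un_siblings_subset:
  assumes "\<sigma> \<union> \<tau> \<in> K" "\<sigma> \<noteq> {}" "\<tau> \<noteq> {}" "\<sigma> \<noteq> \<tau>" "mu gt \<sigma> = mu gt \<tau>"
    and "2 \<le> j" "j \<le> card (\<sigma> \<union> \<tau>)"
  shows "(mu gt ^^ j) (\<sigma> \<union> \<tau>) \<subseteq> mu gt \<sigma>"
proof -
  define \<epsilon> m where "\<epsilon> = \<sigma> \<union> \<tau>" and "m = mu gt \<sigma>"
  have K: "\<sigma> \<in> K" "\<tau> \<in> K" "\<epsilon> \<in> K" using assms(1) face_mem unfolding \<epsilon>_def by blast+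
  have m: "m \<in> facets \<sigma>" "m \<in> facets \<tau>" "m \<in> K"
    using mu_greatest_facet(1)[OF K(1) assms(2)] mu_greatest_facet(1)[OF K(2) assms(3)] assms(5)
      mu_face(3)[OF K(1) assms(2)]
    unfolding m_def by simp_all
  have facets_\<epsilon>: "\<sigma> \<in> facets \<epsilon>" "\<tau> \<in> facets \<epsilon>"
    using facet_of_Un_siblings[OF finite_simplex[OF K(1)] finite_simplex[OF K(2)] m(1,2) assms(4)]
      facet_of_Un_siblings[OF finite_simplex[OF K(2)] finite_simplex[OF K(1)] m(2,1)] assms(4)
    unfolding \<epsilon>_def by (simp_all add: Un_commute)
  then have card_\<epsilon>: "card \<epsilon> = card m + 2" using m(1) unfolding facets_def by simp
  have "m \<subseteq> \<sigma>" "m \<subseteq> \<tau>" using m(1,2) unfolding facets_def by auto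
  show ?thesis
    using assms(7,6) unfolding \<epsilon>_def[symmetric] m_def[symmetric]
  proof (induction j rule: inc_induct)
    case base
    then show ?case using funpow_mu_face[OF K(3), of "card \<epsilon>"] finite_simplex by auto
  next
    case (step j)
    let ?Z = "(mu gt ^^ j) \<epsilon>"
    have Z: "?Z \<in> K" "?Z \<subseteq> \<epsilon>" "?Z \<noteq> {}"
      using funpow_mu_face[OF K(3), of j] step.hyps by auto
    obtain x where "?Z = insert x (mu gt ?Z)"
      using facetsE[OF finite_simplex[OF Z(1)] mu_greatest_facet(1)[OF Z(1,3)]] by blast
    moreover have "mu gt ?Z \<subseteq> m" using step.IH step.prems by simp
    ultimately have "?Z \<subseteq> insert x m" "x \<in> \<epsilon>" using Z(2) by auto
    then have "?Z \<subseteq> \<sigma> \<or> ?Z \<subseteq> \<tau>" using \<open>m \<subseteq> \<sigma>\<close> \<open>m \<subseteq> \<tau>\<close> unfolding \<epsilon>_def by blast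
    then obtain \<rho> where \<rho>: "\<rho> \<in> {\<sigma>, \<tau>}" "?Z \<subseteq> \<rho>" by blast
    define i where "i = j - 2"
    have i: "j = Suc (Suc i)" using step.prems unfolding i_def by simp
    have "?Z = (mu gt ^^ Suc i) \<rho>"
      using funpow_mu_Suc_in_facet[OF K(3), of \<rho> "Suc i"] \<rho> facets_\<epsilon> step.hyps i by auto
    also have "\<dots> = (mu gt ^^ i) m"
      using \<rho>(1) assms(5) unfolding funpow_mu_Suc m_def by auto
    finally show ?case
      using funpow_mu_face[OF m(3), of i] step.hyps i card_\<epsilon> by simp
  qed
qed

lemma mu_Un_siblings:
  assumes "\<sigma> \<union> \<tau> \<in> K" "\<sigma> \<noteq> {}" "\<tau> \<noteq> {}" "\<sigma> \<noteq> \<tau>" "mu gt \<sigma> = mu gt \<tau>"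
  shows "mu gt (\<sigma> \<union> \<tau>) = \<sigma> \<or> mu gt (\<sigma> \<union> \<tau>) = \<tau>"
proof -
  define \<epsilon> m where "\<epsilon> = \<sigma> \<union> \<tau>" and "m = mu gt \<sigma>"
  have K: "\<sigma> \<in> K" "\<tau> \<in> K" "\<epsilon> \<in> K" "\<epsilon> \<noteq> {}"
    using assms(1,2) face_mem unfolding \<epsilon>_def by blast+
  obtain a where a: "a \<notin> m" "\<sigma> = insert a m"
    using facetsE[OF finite_simplex[OF K(1)] mu_greatest_facet(1)[OF K(1) assms(2)]]
    unfolding m_def .
  obtain b where b: "b \<notin> m" "\<tau> = insert b m"
    using facetsE[OF finite_simplex[OF K(2)] mu_greatest_facet(1)[OF K(2) assms(3)]]
    unfolding m_def assms(5) .
  have fin: "finite m" using finite_simplex[OF K(1)] a(2) by simp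
  have card_\<epsilon>: "card \<epsilon> = card m + 2" using a b assms(4) fin unfolding \<epsilon>_def by auto
  note \<mu> = mu_face[OF K(3,4)]
  have "mu gt \<epsilon> \<noteq> {}" using \<mu>(2) card_\<epsilon> by auto
  have "(mu gt ^^ 2) \<epsilon> \<subseteq> m"
    using funpow_mu_Un_siblings_subset[OF assms order_refl] card_\<epsilon> unfolding \<epsilon>_def m_def by simp
  then have "(mu gt ^^ 2) \<epsilon> = m"
    using card_subset_eq[OF fin] funpow_mu_face[OF K(3), of 2] card_\<epsilon> by simp
  then have "m \<subseteq> mu gt \<epsilon>"
    using mu_face(1)[OF \<mu>(3) \<open>mu gt \<epsilon> \<noteq> {}\<close>] by (simp add: numeral_2_eq_2)
  moreover have "card (mu gt \<epsilon> - m) = 1"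
    using card_Diff_subset[OF fin \<open>m \<subseteq> mu gt \<epsilon>\<close>] \<mu>(2) card_\<epsilon> by simp
  then obtain x where "mu gt \<epsilon> - m = {x}" by (rule card_1_singletonE)
  ultimately have "mu gt \<epsilon> = insert x m" "x \<in> \<epsilon>" "x \<notin> m" using \<mu>(1) by auto
  then show ?thesis using a b unfolding \<epsilon>_def by auto
qed

definition mu_minimal :: "'a set \<Rightarrow> bool" where
  "mu_minimal \<rho> \<longleftrightarrow> (\<forall>\<omega>\<in>K. \<omega> \<noteq> {} \<longrightarrow> mu gt \<omega> = mu gt \<rho> \<longrightarrow> geq \<omega> \<rho>)"

lemma ex_mu_minimal:
  assumes "\<sigma> \<in> K" "\<sigma> \<noteq> {}"
  obtains \<rho> where "\<rho> \<in> K" "\<rho> \<noteq> {}" "mu gt \<rho> = mu gt \<sigma>" "mu_minimal \<rho>"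
proof -
  let ?C = "{\<rho> \<in> K. \<rho> \<noteq> {} \<and> mu gt \<rho> = mu gt \<sigma>}"
  have "finite ?C" using finite_complex by simp
  moreover have "?C \<noteq> {}" using assms by blast
  ultimately obtain \<rho> where \<rho>: "\<rho> \<in> ?C" "\<forall>\<omega>\<in>?C. geq \<omega> \<rho>"
    using ex_least[of ?C] by blast
  then have "mu_minimal \<rho>" unfolding mu_minimal_def by simp
  then show thesis using that[of \<rho>] \<rho>(1) by simp
qed

text \<open>Writing \<open>\<sigma> = insert b m\<close> with \<open>m = mu \<sigma>\<close>, the facet \<open>insert b (mu m)\<close> of \<open>\<sigma>\<close> lies below \<open>m\<close>
  but has the same \<open>mu\<close> as \<open>m\<close>.\<close>
lemma not_mu_minimal_mu:
  assumes "\<sigma> \<in> K" "2 \<le> card \<sigma>"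
  shows "\<not> mu_minimal (mu gt \<sigma>)"
proof
  assume minimal: "mu_minimal (mu gt \<sigma>)"
  let ?m = "mu gt \<sigma>"
  have \<sigma>_ne: "\<sigma> \<noteq> {}" using assms(2) by auto
  note m = mu_face[OF assms(1) \<sigma>_ne]
  have m_ne: "?m \<noteq> {}" using m(2) assms(2) by auto
  note mm = mu_face[OF m(3) m_ne]
  obtain a where a: "a \<notin> mu gt ?m" "?m = insert a (mu gt ?m)"
    using facetsE[OF finite_simplex[OF m(3)] mu_greatest_facet(1)[OF m(3) m_ne]] .
  obtain b where b: "b \<notin> ?m" "\<sigma> = insert b ?m"
    using facetsE[OF finite_simplex[OF assms(1)] mu_greatest_facet(1)[OF assms(1) \<sigma>_ne]] .
  define \<gamma> where "\<gamma> = insert b (mu gt ?m)"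
  have fin: "finite (mu gt ?m)" using finite_simplex[OF mm(3)] .
  have b': "b \<notin> mu gt ?m" using b(1) mm(1) by blast
  have \<gamma>_sub: "\<gamma> \<subseteq> \<sigma>" unfolding \<gamma>_def using b(2) mm(1) by blast
  have "card \<gamma> + 1 = card \<sigma>" unfolding \<gamma>_def using fin b' mm(2) m(2) by simp
  then have \<gamma>_facet: "\<gamma> \<in> facets \<sigma>" unfolding facets_def using \<gamma>_sub by simp
  have \<gamma>_K: "\<gamma> \<in> K" using face_mem[OF assms(1) \<gamma>_sub] .
  have "a \<in> ?m" "a \<notin> \<gamma>" using a b(1) unfolding \<gamma>_def by auto
  then have "\<gamma> \<noteq> ?m" by blast
  then have gt_m_\<gamma>: "gt ?m \<gamma>" using mu_greatest_facet(2)[OF assms(1) \<sigma>_ne \<gamma>_facet] by simp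
  have "mu gt \<gamma> = mu gt ?m"
  proof (rule ccontr)
    assume "mu gt \<gamma> \<noteq> mu gt ?m"
    moreover have "\<gamma> \<noteq> {}" unfolding \<gamma>_def by blast
    moreover have "mu gt ?m \<in> facets \<gamma>" unfolding \<gamma>_def using facet_insert[OF fin b'] .
    ultimately have "gt (mu gt \<gamma>) (mu gt ?m)" using mu_greatest_facet(2)[OF \<gamma>_K] by auto
    then have "gt \<gamma> ?m" using gt_if_mu_gt[OF \<gamma>_K m(3) \<open>\<gamma> \<noteq> {}\<close> m_ne] by simp
    then show False using gt_m_\<gamma> gt_asym[OF \<gamma>_K m(3)] by simp
  qed
  then have "geq \<gamma> ?m" using minimal \<gamma>_K unfolding mu_minimal_def \<gamma>_def by auto
  then show False using gt_m_\<gamma> gt_asym[OF \<gamma>_K m(3)] \<open>\<gamma> \<noteq> ?m\<close> by simp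
qed

end

locale union_closed_complex = hereditary_complex +
  fixes r :: nat
  assumes r_pos: "r > 0"
    and union_closed: "\<forall>\<sigma>\<in>K. \<forall>\<tau>\<in>K. sdim \<sigma> = sdim \<tau> \<and> sdim \<sigma> \<ge> int r \<and> mu gt \<sigma> = mu gt \<tau>
           \<longrightarrow> \<sigma> \<union> \<tau> \<in> K"
begin

lemma Un_in_complex:
  "\<sigma> \<in> K \<Longrightarrow> \<tau> \<in> K \<Longrightarrow> card \<sigma> = card \<tau> \<Longrightarrow> r < card \<sigma> \<Longrightarrow> mu gt \<sigma> = mu gt \<tau> \<Longrightarrow> \<sigma> \<union> \<tau> \<in> K"
  using union_closed unfolding sdim_def by auto

text \<open>A removed \<open>mu_minimal\<close> simplex was never the bottom \<open>mu \<sigma>\<close> of a collapsed pair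
  (\<open>not_mu_minimal_mu\<close>), so it was the top and went together with its \<open>mu\<close>-facet.\<close>
definition collapse_invariant :: "'a set set \<Rightarrow> bool" where
  "collapse_invariant L \<longleftrightarrow> L \<subseteq> K \<and> simplicial_complex L \<and>
     (\<forall>\<rho>\<in>K. r < card \<rho> \<longrightarrow> \<rho> \<notin> L \<longrightarrow> mu_minimal \<rho> \<longrightarrow> mu gt \<rho> \<notin> L)"

lemma cofaces_of_mu_greatest:
  assumes inv: "collapse_invariant L" and \<sigma>: "\<sigma> \<in> L" "r < card \<sigma>"
    and greatest: "\<And>\<rho>. \<rho> \<in> L \<Longrightarrow> r < card \<rho> \<Longrightarrow> geq \<sigma> \<rho>"
    and \<tau>: "\<tau> \<in> L" "mu gt \<sigma> \<subseteq> \<tau>"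
  shows "\<tau> = mu gt \<sigma> \<or> \<tau> = \<sigma>"
proof (rule ccontr)
  assume other: "\<not> (\<tau> = mu gt \<sigma> \<or> \<tau> = \<sigma>)"
  have K: "\<sigma> \<in> K" "\<tau> \<in> K" using inv \<sigma>(1) \<tau>(1) unfolding collapse_invariant_def by auto
  have \<sigma>_ne: "\<sigma> \<noteq> {}" using \<sigma>(2) by auto
  note m = mu_face[OF K(1) \<sigma>_ne]
  have "mu gt \<sigma> \<subset> \<tau>" using \<tau>(2) other by blast
  then have "card (mu gt \<sigma>) < card \<tau>" by (rule psubset_card_mono[OF finite_simplex[OF K(2)]])
  then have card_\<tau>: "card \<sigma> \<le> card \<tau>" using m(2) by simp
  then have "gt \<sigma> \<tau>" using greatest[OF \<tau>(1)] \<sigma>(2) other by auto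
  have "card \<tau> = card \<sigma>"
  proof (rule ccontr)
    assume "card \<tau> \<noteq> card \<sigma>"
    then have "gt \<tau> \<sigma>" using gt_if_card_less[OF K(2,1)] card_\<tau> by simp
    then show False using \<open>gt \<sigma> \<tau>\<close> gt_asym[OF K] by simp
  qed
  then have \<tau>_ne: "\<tau> \<noteq> {}" and m_facet: "mu gt \<sigma> \<in> facets \<tau>"
    using \<sigma>(2) \<tau>(2) m(2) unfolding facets_def by auto
  have same_mu: "mu gt \<tau> = mu gt \<sigma>"
  proof (rule ccontr)
    assume "mu gt \<tau> \<noteq> mu gt \<sigma>"
    then have "gt (mu gt \<tau>) (mu gt \<sigma>)" using mu_greatest_facet(2)[OF K(2) \<tau>_ne m_facet] by auto
    then have "gt \<tau> \<sigma>" using gt_if_mu_gt[OF K(2,1) \<tau>_ne \<sigma>_ne] by simp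
    then show False using \<open>gt \<sigma> \<tau>\<close> gt_asym[OF K] by simp
  qed
  have \<epsilon>: "\<sigma> \<union> \<tau> \<in> K" using Un_in_complex[OF K] \<open>card \<tau> = card \<sigma>\<close> \<sigma>(2) same_mu by simp
  have "\<sigma> \<noteq> \<tau>" using other by blast
  have "\<sigma> \<in> facets (\<sigma> \<union> \<tau>)"
    using facet_of_Un_siblings[OF finite_simplex[OF K(1)] finite_simplex[OF K(2)]
        mu_greatest_facet(1)[OF K(1) \<sigma>_ne] m_facet \<open>\<sigma> \<noteq> \<tau>\<close>] .
  moreover have "\<sigma> \<union> \<tau> \<noteq> {}" using \<sigma>_ne by blast
  ultimately have "geq (mu gt (\<sigma> \<union> \<tau>)) \<sigma>" using mu_greatest_facet(2)[OF \<epsilon>] by blast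
  then have "mu gt (\<sigma> \<union> \<tau>) \<noteq> \<tau>"
    using \<open>\<sigma> \<noteq> \<tau>\<close> \<open>gt \<sigma> \<tau>\<close> gt_asym[OF K] by metis
  then have "mu gt (\<sigma> \<union> \<tau>) = \<sigma>"
    using mu_Un_siblings[OF \<epsilon> \<sigma>_ne \<tau>_ne \<open>\<sigma> \<noteq> \<tau>\<close>] same_mu by auto
  then obtain \<rho> where \<rho>: "\<rho> \<in> K" "\<rho> \<noteq> {}" "mu gt \<rho> = \<sigma>" "mu_minimal \<rho>"
    using ex_mu_minimal[OF \<epsilon>] \<sigma>_ne by (metis Un_empty)
  have "card \<rho> = card \<sigma> + 1" using mu_face(2)[OF \<rho>(1,2)] \<rho>(3) by simp
  then have "gt \<rho> \<sigma>" "r < card \<rho>" using gt_if_card_less[OF \<rho>(1) K(1)] \<sigma>(2) by auto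
  then have "\<rho> \<notin> L" using greatest gt_asym[OF K(1) \<rho>(1)] gt_irrefl[OF K(1)] by blast
  then have "\<sigma> \<notin> L" using inv \<rho> \<open>r < card \<rho>\<close> unfolding collapse_invariant_def by auto
  then show False using \<sigma>(1) by contradiction
qed

lemma collapse_step:
  assumes inv: "collapse_invariant L" and \<sigma>: "\<sigma> \<in> L" "r < card \<sigma>"
    and greatest: "\<And>\<rho>. \<rho> \<in> L \<Longrightarrow> r < card \<rho> \<Longrightarrow> geq \<sigma> \<rho>"
  shows "free_pair L \<sigma> (mu gt \<sigma>)" "collapse_invariant (L - {\<sigma>, mu gt \<sigma>})"
proof -
  have "\<sigma> \<in> K" "simplicial_complex L" using inv \<sigma>(1) unfolding collapse_invariant_def by auto
  have \<sigma>_ne: "\<sigma> \<noteq> {}" and two: "2 \<le> card \<sigma>" using \<sigma>(2) r_pos by auto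
  have "mu gt \<sigma> \<noteq> {}" using mu_face(2)[OF \<open>\<sigma> \<in> K\<close> \<sigma>_ne] two by auto
  show free: "free_pair L \<sigma> (mu gt \<sigma>)"
    using free_pairI[OF \<open>simplicial_complex L\<close> \<sigma>(1) mu_greatest_facet(1)[OF \<open>\<sigma> \<in> K\<close> \<sigma>_ne]
        \<open>mu gt \<sigma> \<noteq> {}\<close>] cofaces_of_mu_greatest[OF inv \<sigma> greatest] by blast
  have "\<rho> \<noteq> mu gt \<sigma>" if "mu_minimal \<rho>" for \<rho>
    using not_mu_minimal_mu[OF \<open>\<sigma> \<in> K\<close> two] that by blast
  then show "collapse_invariant (L - {\<sigma>, mu gt \<sigma>})"
    using inv free unfolding collapse_invariant_def free_pair_def by auto
qed

lemma collapses_below_dim: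
  "collapse_invariant L \<Longrightarrow>
    \<exists>L'. elementary_collapse\<^sup>*\<^sup>* L L' \<and> L' \<subseteq> L \<and> simplicial_complex L' \<and> (\<forall>\<sigma>\<in>L'. card \<sigma> \<le> r)"
proof (induction "card L" arbitrary: L rule: less_induct)
  case less
  have fin: "finite L"
    using less.prems finite_subset finite_complex unfolding collapse_invariant_def by blast
  show ?case
  proof (cases "\<forall>\<sigma>\<in>L. card \<sigma> \<le> r")
    case True
    then show ?thesis using less.prems unfolding collapse_invariant_def by blast
  next
    case False
    let ?H = "{\<rho> \<in> L. r < card \<rho>}"
    have "finite ?H" using fin by simp
    moreover have "?H \<noteq> {}" using False by auto
    moreover have "?H \<subseteq> K" using less.prems unfolding collapse_invariant_def by blast
    ultimately obtain \<sigma> where \<sigma>_H: "\<sigma> \<in> ?H" and greatest: "\<forall>\<rho>\<in>?H. geq \<sigma> \<rho>"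
      using ex_greatest by meson
    have \<sigma>: "\<sigma> \<in> L" "r < card \<sigma>" "\<And>\<rho>. \<rho> \<in> L \<Longrightarrow> r < card \<rho> \<Longrightarrow> geq \<sigma> \<rho>"
      using \<sigma>_H greatest by simp_all
    note step = collapse_step[OF less.prems \<sigma>]
    have "L - {\<sigma>, mu gt \<sigma>} \<subset> L" using \<sigma>(1) by blast
    then have "card (L - {\<sigma>, mu gt \<sigma>}) < card L" by (rule psubset_card_mono[OF fin])
    then obtain L' where L': "elementary_collapse\<^sup>*\<^sup>* (L - {\<sigma>, mu gt \<sigma>}) L'"
        "L' \<subseteq> L - {\<sigma>, mu gt \<sigma>}" "simplicial_complex L'" "\<forall>\<sigma>\<in>L'. card \<sigma> \<le> r"
      using less.hyps step(2) by blast
    have "elementary_collapse L (L - {\<sigma>, mu gt \<sigma>})"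
      unfolding elementary_collapse_def using step(1) by blast
    then have "elementary_collapse\<^sup>*\<^sup>* L L'" using L'(1) by (rule converse_rtranclp_into_rtranclp)
    then show ?thesis using L' by blast
  qed
qed

end

theorem lemma7:
  fixes K :: "'a set set" and gt :: "'a set \<Rightarrow> 'a set \<Rightarrow> bool" and r :: nat
  assumes "simplicial_complex K"
    and "hereditary K gt"
    and "r > 0"
    and "\<forall>\<sigma>\<in>K. \<forall>\<tau>\<in>K. sdim \<sigma> = sdim \<tau> \<and> sdim \<sigma> \<ge> int r \<and> mu gt \<sigma> = mu gt \<tau>
           \<longrightarrow> \<sigma> \<union> \<tau> \<in> K"
  shows "\<exists>L. collapses_on K L \<and> L \<subseteq> K \<and> simplicial_complex L \<and> (\<forall>\<sigma>\<in>L. sdim \<sigma> < int r)"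
proof -
  interpret union_closed_complex K gt r using assms by unfold_locales
  have "collapse_invariant K" using assms(1) unfolding collapse_invariant_def by blast
  then obtain L where L: "collapses_on K L" "L \<subseteq> K" "simplicial_complex L" "\<forall>\<sigma>\<in>L. card \<sigma> \<le> r"
    using collapses_below_dim unfolding collapses_on_def by blast
  moreover have "\<forall>\<sigma>\<in>L. sdim \<sigma> < int r" using L(4) unfolding sdim_def by fastforce
  ultimately show ?thesis by blast
qed

end
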